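(* Let $(X,d)$ be a metric space and $f:\ell_\infty(X)\to X$. Then: (i) $f$ has a generalized contractive fixed point if and only if $\tilde f$ has a contractive fixed point with respect to the Tychonoff topology on $\ell_\infty(X)$; (ii) if $\mathbf{x}_*$ is a contractive fixed point of $\tilde f$ with respect to the Tychonoff topology, then $\mathbf{x}_*=(x_*,x_*,\dots)$, where $x_*$ is a generalized contractive fixed point of $f$.
   Context: $\mathbb{N}^*=\{0,1,2,\dots\}$; $\ell_\infty(X)$ is the set of all bounded sequences $(x_n)_{n\in\mathbb{N}^*}$ in $X$, and the Tychonoff topology on it is the subspace topology from $\prod_{n\in\mathbb{N}^*}X$. For $f:\ell_\infty(X)\to X$ define $\tilde f:\ell_\infty(X)\to\ell_\infty(X)$ by $\tilde f((x_n))=(f((x_n)),x_0,x_1,\dots)$. For $x\in\ell_\infty(X)$ put $\tilde{x}^0:=x$ and, for $k\ge1$, $x^k:=f(\tilde{x}^{k-1})$, $\tilde{x}^k:=\tilde f(\tilde{x}^{k-1})$; $(x^k)$ is the sequence of generalized iterates of $f$ at $x$. A point $x_*\in X$ is a generalized fixed point of $f$ if $f(x_*,x_*,\dots)=x_*$; it is a generalized contractive fixed point (GCFP) if moreover for every $x\in\ell_\infty(X)$ the sequence of generalized iterates of $f$ at $x$ converges to $x_*$. For a selfmap $g$ of a topological space $Y$, a fixed point $y_*$ of $g$ is a contractive fixed point (CFP) if $g^k(y)\to y_*$ for every $y\in Y$. *)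

theory Defs
  imports "HOL-Analysis.Analysis"
begin

definition linf :: "(nat \<Rightarrow> 'a::metric_space) set" where
  "linf = {x. bounded (range x)}"

definition tychonoff_linf :: "(nat \<Rightarrow> 'a::metric_space) topology" where
  "tychonoff_linf = subtopology (product_topology (\<lambda>_. euclidean) UNIV) linf"

text \<open>The map f-tilde: x \<mapsto> (f x, x0, x1, ...).\<close>
definition gext :: "((nat \<Rightarrow> 'a) \<Rightarrow> 'a) \<Rightarrow> (nat \<Rightarrow> 'a) \<Rightarrow> (nat \<Rightarrow> 'a)" where
  "gext f x = (\<lambda>n. case n of 0 \<Rightarrow> f x | Suc m \<Rightarrow> x m)"

text \<open>Generalized iterates: gen_iter f x k is the paper's x^(k+1) = f(x-tilde^k).\<close>
definition gen_iter :: "((nat \<Rightarrow> 'a) \<Rightarrow> 'a) \<Rightarrow> (nat \<Rightarrow> 'a) \<Rightarrow> nat \<Rightarrow> 'a" where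
  "gen_iter f x k = f ((gext f ^^ k) x)"

definition gen_fixed_point :: "((nat \<Rightarrow> 'a) \<Rightarrow> 'a) \<Rightarrow> 'a \<Rightarrow> bool" where
  "gen_fixed_point f xs \<longleftrightarrow> f (\<lambda>_. xs) = xs"

definition gcfp :: "((nat \<Rightarrow> 'a::metric_space) \<Rightarrow> 'a) \<Rightarrow> 'a \<Rightarrow> bool" where
  "gcfp f xs \<longleftrightarrow> gen_fixed_point f xs \<and>
     (\<forall>x\<in>linf. (gen_iter f x) \<longlonglongrightarrow> xs)"

definition cfp :: "'b topology \<Rightarrow> ('b \<Rightarrow> 'b) \<Rightarrow> 'b \<Rightarrow> bool" where
  "cfp T g ys \<longleftrightarrow> ys \<in> topspace T \<and> g ys = ys \<and>
     (\<forall>y\<in>topspace T. limitin T (\<lambda>k. (g ^^ k) y) ys sequentially)"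

end

theory Submission
  imports Defs
begin

text \<open>The map \<open>gext f\<close> shifts a sequence one place to the right and puts the value of \<open>f\<close>
  in front, so the \<open>n\<close>-th entry of \<open>(gext f ^^ (k + n + 1)) x\<close> is the generalized iterate
  \<open>gen_iter f x k\<close>. Hence the orbit of \<open>gext f\<close> converges coordinatewise, i.e. in the Tychonoff
  topology, exactly when the generalized iterates converge, and to the constant sequence of their
  limit. Moreover a fixed point of \<open>gext f\<close> equals its own shift, so it is a constant sequence
  whose value is a generalized fixed point of \<open>f\<close>.\<close>

lemma gext_power_Suc_0: "(gext f ^^ Suc k) x 0 = gen_iter f x k"
  by (simp add: gext_def gen_iter_def)

lemma gext_power_add_index: "(gext f ^^ (k + n)) x n = (gext f ^^ k) x 0"
proof (induction n arbitrary: k)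
  case (Suc n)
  have "(gext f ^^ (k + Suc n)) x (Suc n) = (gext f ^^ (k + n)) x n"
    by (simp add: gext_def)
  then show ?case using Suc by simp
qed simp

lemma gext_power_Suc_add_index: "(gext f ^^ (Suc k + n)) x n = gen_iter f x k"
  by (simp only: gext_power_add_index gext_power_Suc_0)

lemma tendsto_gext_power_iff:
  "(\<lambda>k. (gext f ^^ k) x n) \<longlonglongrightarrow> c \<longleftrightarrow> gen_iter f x \<longlonglongrightarrow> c"
proof -
  have "(gext f ^^ (k + Suc n)) x n = gen_iter f x k" for k
    using gext_power_Suc_add_index[where k = k and n = n] by simp
  then have shifted: "(\<lambda>k. (gext f ^^ (k + Suc n)) x n) = gen_iter f x"
    by (rule ext)
  show ?thesis
  proof
    assume "(\<lambda>k. (gext f ^^ k) x n) \<longlonglongrightarrow> c"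
    then show "gen_iter f x \<longlonglongrightarrow> c"
      unfolding shifted[symmetric] by (rule LIMSEQ_ignore_initial_segment)
  next
    assume "gen_iter f x \<longlonglongrightarrow> c"
    then show "(\<lambda>k. (gext f ^^ k) x n) \<longlonglongrightarrow> c"
      unfolding shifted[symmetric] by (rule LIMSEQ_offset)
  qed
qed

lemma const_in_linf: "(\<lambda>_. c) \<in> linf"
  by (simp add: linf_def)

lemma gext_in_linf:
  assumes "x \<in> linf"
  shows "gext f x \<in> linf"
proof -
  have "range (gext f x) \<subseteq> insert (f x) (range x)"
    by (auto simp: gext_def split: nat.splits)
  moreover have "bounded (insert (f x) (range x))"
    using assms by (simp add: linf_def)
  ultimately show ?thesis
    unfolding linf_def mem_Collect_eq by (rule bounded_subset[rotated])
qed

lemma gext_power_in_linf: "x \<in> linf \<Longrightarrow> (gext f ^^ k) x \<in> linf"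
  by (induction k) (simp_all add: gext_in_linf)

lemma topspace_tychonoff_linf: "topspace tychonoff_linf = linf"
  by (simp add: tychonoff_linf_def)

lemma limitin_tychonoff_linf:
  "limitin tychonoff_linf g l F \<longleftrightarrow>
     l \<in> linf \<and> eventually (\<lambda>a. g a \<in> linf) F \<and> (\<forall>i. ((\<lambda>a. g a i) \<longlongrightarrow> l i) F)"
  by (simp add: tychonoff_linf_def limitin_subtopology limitin_componentwise limitin_canonical_iff)

lemma gext_fixed_iff: "gext f y = y \<longleftrightarrow> (\<exists>c. y = (\<lambda>_. c) \<and> gen_fixed_point f c)"
proof
  assume fixed: "gext f y = y"
  have shift: "y (Suc n) = y n" for n
    using fun_cong[OF fixed, of "Suc n"] by (simp add: gext_def)
  have const: "y = (\<lambda>_. y 0)"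
  proof
    show "y n = y 0" for n
      by (induction n) (simp_all add: shift)
  qed
  have "f y = y 0"
    using fun_cong[OF fixed, of 0] by (simp add: gext_def)
  then have "gen_fixed_point f (y 0)"
    unfolding gen_fixed_point_def by (subst const[symmetric])
  with const show "\<exists>c. y = (\<lambda>_. c) \<and> gen_fixed_point f c"
    by blast
next
  assume "\<exists>c. y = (\<lambda>_. c) \<and> gen_fixed_point f c"
  then obtain c where y: "y = (\<lambda>_. c)" and fixed: "f (\<lambda>_. c) = c"
    by (auto simp: gen_fixed_point_def)
  show "gext f y = y"
  proof
    show "gext f y n = y n" for n
      using fixed by (cases n) (simp_all add: y gext_def)
  qed
qed

lemma limitin_gext_power_iff:
  assumes "x \<in> linf"
  shows "limitin tychonoff_linf (\<lambda>k. (gext f ^^ k) x) (\<lambda>_. c) sequentially \<longleftrightarrow>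
    gen_iter f x \<longlonglongrightarrow> c"
  using assms by (simp add: limitin_tychonoff_linf const_in_linf gext_power_in_linf
      tendsto_gext_power_iff)

lemma cfp_gext_iff: "cfp tychonoff_linf (gext f) y \<longleftrightarrow> (\<exists>c. y = (\<lambda>_. c) \<and> gcfp f c)"
proof
  assume cfp: "cfp tychonoff_linf (gext f) y"
  then obtain c where y: "y = (\<lambda>_. c)" and "gen_fixed_point f c"
    unfolding cfp_def gext_fixed_iff by blast
  moreover have "gen_iter f x \<longlonglongrightarrow> c" if "x \<in> linf" for x
    using cfp that unfolding cfp_def topspace_tychonoff_linf y
    by (simp add: limitin_gext_power_iff)
  ultimately show "\<exists>c. y = (\<lambda>_. c) \<and> gcfp f c"
    unfolding gcfp_def by blast
next
  assume "\<exists>c. y = (\<lambda>_. c) \<and> gcfp f c"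
  then obtain c where "y = (\<lambda>_. c)" and "gcfp f c"
    by blast
  then show "cfp tychonoff_linf (gext f) y"
    unfolding cfp_def gcfp_def topspace_tychonoff_linf
    by (simp add: const_in_linf gext_fixed_iff limitin_gext_power_iff) blast
qed

theorem mainTheorem8:
  fixes f :: "(nat \<Rightarrow> 'a::metric_space) \<Rightarrow> 'a"
  shows "((\<exists>xs. gcfp f xs) \<longleftrightarrow> (\<exists>ys. cfp tychonoff_linf (gext f) ys))
    \<and> (\<forall>ys. cfp tychonoff_linf (gext f) ys \<longrightarrow> (\<exists>xs. ys = (\<lambda>_. xs) \<and> gcfp f xs))"
  by (auto simp: cfp_gext_iff)

end
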